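(* Let $n\ge2$ and let $\mathbb{K}$ be a field with $\operatorname{char}\mathbb{K}$ either $0$ or coprime to both $n$ and $n-1$. Let $A_n=\mathbb{K}[x,y]/(y^{2n+3},\, x^ny^2-y^{n+2},\, x^{2n+1}-xy^{n+1})$ with maximal ideal $\mathfrak{m}_n=(x,y)$ and socle $\operatorname{Soc}A_n$. Let $U_1,U_2\subseteq\mathfrak{m}_n$ be complementary hyperplanes such that $y^{2n+1}\in U_1$ and $y^{2n+1}\notin U_2$. Then there is no $\phi\in\operatorname{Aut}(A_n)$ with $\phi(U_1)=U_2$.
   Context: For a finite-dimensional local algebra $A$ with maximal ideal $\mathfrak{m}$, the socle is $\operatorname{Soc}A=\{s\in A\mid s\mathfrak{m}=0\}$; $A$ is Gorenstein if $\dim\operatorname{Soc}A=1$. For Gorenstein $A$, a complementary hyperplane is a linear subspace $U\subseteq\mathfrak{m}$ with $\mathfrak{m}=U\oplus\operatorname{Soc}A$. (For $A_n$ one has $\operatorname{Soc}A_n=\langle y^{2n+2}\rangle$.) $\operatorname{Aut}(A_n)$ is the group of $\mathbb{K}$-algebra automorphisms of $A_n$. *)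

theory Defs
  imports "HOL-Computational_Algebra.Polynomial"
begin

text \<open>K[x,y] is modelled as ('a poly) poly: the outer variable is y, the inner one is x.
  The algebra A_n = K[x,y]/I_n is modelled through preimages: a K-subspace of A_n is
  the same as a K-subspace of K[x,y] containing I_n, and a K-algebra automorphism of
  A_n is the same as (the class of) a map K[x,y] -> K[x,y] inducing a bijective
  K-algebra endomorphism of the quotient.\<close>

definition cst :: "'a::field \<Rightarrow> 'a poly poly" where
  "cst c = [:[:c:]:]"

definition Xv :: "'a::field poly poly" where
  "Xv = [:[:0, 1:]:]"

definition Yv :: "'a::field poly poly" where
  "Yv = [:0, 1:]"

definition In :: "nat \<Rightarrow> 'a::field poly poly set" where
  "In n = {a * Yv ^ (2*n+3) + b * (Xv ^ n * Yv ^ 2 - Yv ^ (n+2))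
             + c * (Xv ^ (2*n+1) - Xv * Yv ^ (n+1)) | a b c. True}"

definition mpre :: "'a::field poly poly set" where
  "mpre = {a * Xv + b * Yv | a b. True}"

definition socpre :: "nat \<Rightarrow> 'a::field poly poly set" where
  "socpre n = {s. \<forall>t\<in>mpre. s * t \<in> In n}"

definition lin_subspace :: "'a::field poly poly set \<Rightarrow> bool" where
  "lin_subspace U \<longleftrightarrow> 0 \<in> U \<and> (\<forall>u\<in>U. \<forall>v\<in>U. u + v \<in> U)
     \<and> (\<forall>c. \<forall>u\<in>U. cst c * u \<in> U)"

definition compl_hyperplane :: "nat \<Rightarrow> 'a::field poly poly set \<Rightarrow> bool" where
  "compl_hyperplane n U \<longleftrightarrow> lin_subspace U \<and> In n \<subseteq> U \<and> U \<subseteq> mpre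
     \<and> {u + s | u s. u \<in> U \<and> s \<in> socpre n} = mpre
     \<and> U \<inter> socpre n \<subseteq> In n"

definition induces_aut :: "nat \<Rightarrow> ('a::field poly poly \<Rightarrow> 'a poly poly) \<Rightarrow> bool" where
  "induces_aut n f \<longleftrightarrow>
     (\<forall>p q. p - q \<in> In n \<longrightarrow> f p - f q \<in> In n)
   \<and> (\<forall>p q. f (p + q) - (f p + f q) \<in> In n)
   \<and> (\<forall>p q. f (p * q) - f p * f q \<in> In n)
   \<and> (\<forall>c p. f (cst c * p) - cst c * f p \<in> In n)
   \<and> f 1 - 1 \<in> In n
   \<and> (\<forall>p q. f p - f q \<in> In n \<longrightarrow> p - q \<in> In n)
   \<and> (\<forall>q. \<exists>p. f p - q \<in> In n)"

definition maps_onto :: "nat \<Rightarrow> ('a::field poly poly \<Rightarrow> 'a poly poly)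
     \<Rightarrow> 'a poly poly set \<Rightarrow> 'a poly poly set \<Rightarrow> bool" where
  "maps_onto n f U1 U2 \<longleftrightarrow> (\<forall>u\<in>U1. f u \<in> U2) \<and> (\<forall>v\<in>U2. \<exists>u\<in>U1. f u - v \<in> In n)"

end

(* Let u and v represent the images of x and y under an automorphism of A_n. Both lie in the
   maximal ideal and satisfy the defining relations of A_n. Modulo y these relations become
   divisibilities by x^(2n+1) in K[x], which rule out a linear x-term in v, so v = x^2 e + y d.
   Every element of I_n satisfies a few linear relations among its coefficients; applied to the
   relations for u and v, with weighted-order estimates discarding the higher terms, they show
   that either d(0) = 0, so v lies in m^2, or u lies in (x, y^2), v = x^3 e' + y d' and v has no
   y^2-term; the last two steps need 2, n and n - 1 to be invertible in K. In both cases
   v^(2n+1) is congruent to k y^(2n+1) modulo I_n for a scalar k. As y^(2n+1) lies in U_1, its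
   image lies in U_2; for k <> 0 this puts y^(2n+1) into U_2, and for k = 0 injectivity puts
   y^(2n+1) into I_n, which is contained in U_2. *)

theory Submission
  imports Defs
begin

section \<open>Order of vanishing and the characteristic\<close>

lemma order_power: "p \<noteq> 0 \<Longrightarrow> order a (p ^ k) = k * order a p"
  by (induction k) (simp_all add: order_mult)

lemma X_power_dvd_iff_order: "[:0,1:]^k dvd p \<longleftrightarrow> p = 0 \<or> k \<le> order 0 p"
  using order_divides[of 0 k p] by simp

lemma order_0_eq_1:
  fixes v :: "'a::field poly"
  assumes "coeff v 0 = 0" "coeff v 1 \<noteq> 0"
  shows "order 0 v = 1"
proof -
  have "v \<noteq> 0" using assms(2) by auto
  have "[:0,1:] dvd v" using assms(1) by (simp add: dvd_iff_poly_eq_0 poly_0_coeff_0)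
  moreover have "\<not> [:0,1:]^2 dvd v"
  proof
    assume "[:0,1:]^2 dvd v"
    then obtain w where "v = [:0,1:]^2 * w" ..
    then have "coeff v 1 = 0" by (simp add: power2_eq_square)
    with assms(2) show False ..
  qed
  ultimately show ?thesis
    using \<open>v \<noteq> 0\<close> X_power_dvd_iff_order[of 1 v] X_power_dvd_iff_order[of 2 v] by auto
qed

lemma of_nat_neq_0_if_CHAR_coprime:
  assumes "k \<noteq> 0" "CHAR('a::semiring_1) = 0 \<or> coprime CHAR('a) k"
  shows "(of_nat k :: 'a) \<noteq> 0"
proof
  assume "(of_nat k :: 'a) = 0"
  then have "CHAR('a) dvd k" by (simp add: of_nat_eq_0_iff_char_dvd)
  with assms have "is_unit CHAR('a)" by (auto intro: coprime_common_divisor)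
  then show False using of_nat_CHAR[where ?'a = 'a] by simp
qed

lemma two_neq_0_if_CHAR_coprime:
  assumes "n \<ge> 2" "CHAR('a::semiring_1) = 0 \<or> (coprime CHAR('a) n \<and> coprime CHAR('a) (n - 1))"
  shows "(2 :: 'a) \<noteq> 0"
proof -
  have "even n \<or> even (n - 1)" using assms(1) by presburger
  then obtain m where "m = n \<or> m = n - 1" "even m" by blast
  moreover from this(2) obtain b where "m = 2 * b" ..
  moreover have "(of_nat m :: 'a) \<noteq> 0"
    using calculation(1) assms of_nat_neq_0_if_CHAR_coprime[of m] by fastforce
  ultimately show ?thesis by auto
qed

section \<open>Coefficients of bivariate polynomials\<close>

definition coeff2 :: "'a::field poly poly \<Rightarrow> nat \<Rightarrow> nat \<Rightarrow> 'a" where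
  "coeff2 p i j = coeff (coeff p j) i"

lemma coeff2_add [simp]: "coeff2 (p + q) i j = coeff2 p i j + coeff2 q i j"
  by (simp add: coeff2_def)

lemma coeff2_diff [simp]: "coeff2 (p - q) i j = coeff2 p i j - coeff2 q i j"
  by (simp add: coeff2_def)

lemma coeff2_0 [simp]: "coeff2 0 i j = 0"
  by (simp add: coeff2_def)

lemma coeff2_mult: "coeff2 (p * q) i j = (\<Sum>l\<le>j. \<Sum>k\<le>i. coeff2 p k l * coeff2 q (i - k) (j - l))"
  by (simp add: coeff2_def coeff_mult coeff_sum)

lemma const_poly_mult: "[:a:] * p = smult a p"
  by (simp add: mult_pCons_left)

lemma Xv_power: "Xv ^ k = [:monom 1 k:]"
  by (simp add: Xv_def poly_const_pow monom_altdef)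

lemma Yv_power: "Yv ^ k = monom 1 k"
  by (simp add: Yv_def monom_altdef)

lemma coeff2_Xv_power_mult [simp]:
  "coeff2 (Xv ^ k * p) i j = (if k \<le> i then coeff2 p (i - k) j else 0)"
  by (simp add: coeff2_def Xv_power const_poly_mult coeff_monom_mult)

lemma coeff2_Yv_power_mult [simp]:
  "coeff2 (Yv ^ k * p) i j = (if k \<le> j then coeff2 p i (j - k) else 0)"
  by (simp add: coeff2_def Yv_power coeff_monom_mult)

lemma coeff2_Xv_mult [simp]: "coeff2 (Xv * p) i j = (if 1 \<le> i then coeff2 p (i - 1) j else 0)"
  using coeff2_Xv_power_mult[of 1 p i j] by simp

lemma coeff2_Yv_mult [simp]: "coeff2 (Yv * p) i j = (if 1 \<le> j then coeff2 p i (j - 1) else 0)"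
  using coeff2_Yv_power_mult[of 1 p i j] by simp

lemma coeff2_cst_mult [simp]: "coeff2 (cst c * p) i j = c * coeff2 p i j"
  by (simp add: coeff2_def cst_def const_poly_mult)

lemma coeff2_cst [simp]: "coeff2 (cst c) i j = (if i = 0 \<and> j = 0 then c else 0)"
  by (simp add: coeff2_def cst_def coeff_pCons split: nat.split)

lemma cst_0 [simp]: "cst 0 = 0"
  by (simp add: cst_def)

lemma cst_1 [simp]: "cst 1 = 1"
  by (simp add: cst_def pCons_one)

lemma coeff2_1 [simp]: "coeff2 1 i j = (if i = 0 \<and> j = 0 then 1 else 0)"
  using coeff2_cst[of 1 i j] by simp

lemma coeff2_Yv [simp]: "coeff2 Yv i j = (if i = 0 \<and> j = 1 then 1 else 0)"
  using coeff2_Yv_mult[of 1 i j] by auto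

lemma cst_power: "cst (a ^ k) = cst a ^ k"
  by (simp add: cst_def poly_const_pow)

lemma cst_mult: "cst (a * b) = cst a * cst b"
  by (simp add: cst_def)

lemma cst_minus: "cst (- a) = - cst a"
  by (simp add: cst_def)

definition val0 :: "'a::field poly poly \<Rightarrow> 'a" where
  "val0 p = coeff2 p 0 0"

definition dy0 :: "'a::field poly poly \<Rightarrow> 'a" where
  "dy0 p = coeff2 p 0 1"

lemma val0_diff: "val0 (p - q) = val0 p - val0 q"
  by (simp add: val0_def)

lemma val0_mult: "val0 (p * q) = val0 p * val0 q"
  by (simp add: val0_def coeff2_def coeff_mult_0)

lemma val0_power: "val0 (p ^ k) = val0 p ^ k"
  by (induction k) (simp_all add: val0_mult, simp add: val0_def coeff2_def)

lemma dy0_mult: "dy0 (p * q) = dy0 p * val0 q + val0 p * dy0 q"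
  by (simp add: dy0_def val0_def coeff2_mult atMost_Suc)

lemma dy0_power: "dy0 (p ^ k) = of_nat k * val0 p ^ (k - 1) * dy0 p"
proof (induction k)
  case 0
  then show ?case by (simp add: dy0_def)
next
  case (Suc k)
  then show ?case
    by (cases k) (simp_all add: dy0_mult val0_power val0_mult algebra_simps)
qed

lemma val0_eq_0E:
  assumes "val0 p = 0"
  obtains a b where "p = Xv * a + Yv * b"
proof -
  obtain p0 r where p: "p = pCons p0 r" by (rule pCons_cases)
  obtain a0 q0 where p0: "p0 = pCons a0 q0" by (rule pCons_cases)
  have "a0 = 0" using assms by (simp add: val0_def coeff2_def p p0)
  then have "p = Xv * [:q0:] + Yv * r"
    by (simp add: p p0 Xv_def Yv_def)
  then show ?thesis by (rule that)
qed

section \<open>Weighted order\<close>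

definition wt_ord_ge :: "nat \<Rightarrow> nat \<Rightarrow> nat \<Rightarrow> 'a::field poly poly \<Rightarrow> bool" where
  "wt_ord_ge a b T p \<longleftrightarrow> (\<forall>i j. coeff2 p i j \<noteq> 0 \<longrightarrow> T \<le> a*i + b*j)"

lemma coeff2_eq_0_if_wt_ord_ge: "wt_ord_ge a b T p \<Longrightarrow> a*i + b*j < T \<Longrightarrow> coeff2 p i j = 0"
  unfolding wt_ord_ge_def by force

lemma wt_ord_ge_0 [simp]: "wt_ord_ge a b 0 p"
  by (simp add: wt_ord_ge_def)

lemma wt_ord_ge_zero_poly [simp]: "wt_ord_ge a b T 0"
  by (simp add: wt_ord_ge_def)

lemma wt_ord_ge_mono: "wt_ord_ge a b T p \<Longrightarrow> T' \<le> T \<Longrightarrow> wt_ord_ge a b T' p"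
  unfolding wt_ord_ge_def by force

lemma wt_ord_ge_add: "wt_ord_ge a b T p \<Longrightarrow> wt_ord_ge a b T q \<Longrightarrow> wt_ord_ge a b T (p + q)"
  unfolding wt_ord_ge_def by (metis add.right_neutral coeff2_add)

lemma wt_ord_ge_diff: "wt_ord_ge a b T p \<Longrightarrow> wt_ord_ge a b T q \<Longrightarrow> wt_ord_ge a b T (p - q)"
  unfolding wt_ord_ge_def by (metis coeff2_diff diff_self diff_zero)

lemma wt_ord_ge_cst_mult: "wt_ord_ge a b T p \<Longrightarrow> wt_ord_ge a b T (cst c * p)"
  unfolding wt_ord_ge_def by simp

lemma wt_ord_ge_Xv_power_mult: "wt_ord_ge a b (T - k*a) p \<Longrightarrow> wt_ord_ge a b T (Xv^k * p)"
  unfolding wt_ord_ge_def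
proof (intro allI impI)
  fix i j
  assume "\<forall>i j. coeff2 p i j \<noteq> 0 \<longrightarrow> T - k*a \<le> a*i + b*j" and "coeff2 (Xv^k * p) i j \<noteq> 0"
  then have "k \<le> i" "T - k*a \<le> a*(i - k) + b*j" by (auto split: if_splits)
  moreover have "a*(i - k) + k*a = a*i" using \<open>k \<le> i\<close> by (simp add: diff_mult_distrib2)
  ultimately show "T \<le> a*i + b*j" by linarith
qed

lemma wt_ord_ge_Yv_power_mult: "wt_ord_ge a b (T - k*b) p \<Longrightarrow> wt_ord_ge a b T (Yv^k * p)"
  unfolding wt_ord_ge_def
proof (intro allI impI)
  fix i j
  assume "\<forall>i j. coeff2 p i j \<noteq> 0 \<longrightarrow> T - k*b \<le> a*i + b*j" and "coeff2 (Yv^k * p) i j \<noteq> 0"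
  then have "k \<le> j" "T - k*b \<le> a*i + b*(j - k)" by (auto split: if_splits)
  moreover have "b*(j - k) + k*b = b*j" using \<open>k \<le> j\<close> by (simp add: diff_mult_distrib2)
  ultimately show "T \<le> a*i + b*j" by linarith
qed

lemma wt_ord_ge_Xv_mult: "wt_ord_ge a b (T - a) p \<Longrightarrow> wt_ord_ge a b T (Xv * p)"
  using wt_ord_ge_Xv_power_mult[of a b T 1 p] by simp

lemma wt_ord_ge_Yv_mult: "wt_ord_ge a b (T - b) p \<Longrightarrow> wt_ord_ge a b T (Yv * p)"
  using wt_ord_ge_Yv_power_mult[of a b T 1 p] by simp

lemma wt_ord_ge_Yv: "T \<le> b \<Longrightarrow> wt_ord_ge a b T Yv"
  unfolding wt_ord_ge_def by simp

lemmas wt_ord_ge_intros = wt_ord_ge_add wt_ord_ge_diff wt_ord_ge_cst_mult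
  wt_ord_ge_Xv_power_mult wt_ord_ge_Yv_power_mult wt_ord_ge_Xv_mult wt_ord_ge_Yv_mult wt_ord_ge_Yv

lemma wt_ord_ge_mult:
  assumes "wt_ord_ge a b T1 p" "wt_ord_ge a b T2 q"
  shows "wt_ord_ge a b (T1 + T2) (p * q)"
  unfolding wt_ord_ge_def
proof (intro allI impI)
  fix i j
  assume "coeff2 (p * q) i j \<noteq> 0"
  then obtain l k where "l \<le> j" "k \<le> i" "coeff2 p k l * coeff2 q (i - k) (j - l) \<noteq> 0"
    unfolding coeff2_mult by (meson atMost_iff sum.not_neutral_contains_not_neutral)
  then have "T1 \<le> a*k + b*l" "T2 \<le> a*(i - k) + b*(j - l)"
    "a*k + a*(i - k) = a*i" "b*l + b*(j - l) = b*j"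
    using assms unfolding wt_ord_ge_def by (auto simp: add_mult_distrib2[symmetric])
  then show "T1 + T2 \<le> a*i + b*j" by linarith
qed

lemma wt_ord_ge_power: "wt_ord_ge a b T p \<Longrightarrow> wt_ord_ge a b (k*T) (p ^ k)"
  by (induction k) (simp_all add: wt_ord_ge_mult)

lemma wt_ord_ge_sum: "(\<And>x. x \<in> A \<Longrightarrow> wt_ord_ge a b T (f x)) \<Longrightarrow> wt_ord_ge a b T (\<Sum>x\<in>A. f x)"
  by (induction A rule: infinite_finite_induct) (simp_all add: wt_ord_ge_add)

lemma wt_ord_ge_power_diff:
  assumes "wt_ord_ge a b T p" "wt_ord_ge a b T q" "wt_ord_ge a b T' (p - q)"
  shows "wt_ord_ge a b (T' + (m - 1) * T) (p ^ m - q ^ m)"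
proof (cases m)
  case (Suc k)
  have "wt_ord_ge a b (k * T) (q ^ (m - Suc i) * p ^ i)" if "i < m" for i
    using wt_ord_ge_mult[OF wt_ord_ge_power[OF assms(2)] wt_ord_ge_power[OF assms(1)],
        of "m - Suc i" i] that Suc by (simp add: add_mult_distrib[symmetric])
  then have "wt_ord_ge a b (k * T) (\<Sum>i<m. q ^ (m - Suc i) * p ^ i)"
    by (intro wt_ord_ge_sum) simp
  then have "wt_ord_ge a b (T' + k * T) ((p - q) * (\<Sum>i<m. q ^ (m - Suc i) * p ^ i))"
    by (rule wt_ord_ge_mult[OF assms(3)])
  then show ?thesis
    using Suc by (simp only: power_diff_sumr2 diff_Suc_1)
qed simp

lemma wt_ord_ge_if_val0_eq_0: "val0 p = 0 \<Longrightarrow> wt_ord_ge 1 1 1 p"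
  unfolding wt_ord_ge_def val0_def by (metis One_nat_def add_is_0 less_one mult_1 not_less)

section \<open>The ideal \<open>I\<^sub>n\<close>\<close>

lemma InE:
  assumes "p \<in> In n"
  obtains a b c where
    "p = a * Yv^(2*n+3) + b * (Xv^n * Yv^2 - Yv^(n+2)) + c * (Xv^(2*n+1) - Xv * Yv^(n+1))"
  using assms unfolding In_def by blast

lemma InI:
  "a * Yv^(2*n+3) + b * (Xv^n * Yv^2 - Yv^(n+2)) + c * (Xv^(2*n+1) - Xv * Yv^(n+1)) \<in> In n"
  unfolding In_def by blast

lemma In_add:
  assumes "p \<in> In n" "q \<in> In n"
  shows "p + q \<in> In n"
proof -
  obtain a b c where p:
    "p = a * Yv^(2*n+3) + b * (Xv^n * Yv^2 - Yv^(n+2)) + c * (Xv^(2*n+1) - Xv * Yv^(n+1))"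
    using assms(1) by (rule InE)
  obtain a' b' c' where q:
    "q = a' * Yv^(2*n+3) + b' * (Xv^n * Yv^2 - Yv^(n+2)) + c' * (Xv^(2*n+1) - Xv * Yv^(n+1))"
    using assms(2) by (rule InE)
  have "p + q = (a + a') * Yv^(2*n+3) + (b + b') * (Xv^n * Yv^2 - Yv^(n+2))
      + (c + c') * (Xv^(2*n+1) - Xv * Yv^(n+1))"
    unfolding p q by (simp add: algebra_simps)
  then show ?thesis by (simp only: InI)
qed

lemma In_mult_left:
  assumes "p \<in> In n"
  shows "h * p \<in> In n"
proof -
  obtain a b c where p:
    "p = a * Yv^(2*n+3) + b * (Xv^n * Yv^2 - Yv^(n+2)) + c * (Xv^(2*n+1) - Xv * Yv^(n+1))"
    using assms by (rule InE)
  have "h * p = (h * a) * Yv^(2*n+3) + (h * b) * (Xv^n * Yv^2 - Yv^(n+2))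
      + (h * c) * (Xv^(2*n+1) - Xv * Yv^(n+1))"
    unfolding p by (simp add: algebra_simps)
  then show ?thesis by (simp only: InI)
qed

lemma In_mult_right: "p \<in> In n \<Longrightarrow> p * h \<in> In n"
  by (metis In_mult_left mult.commute)

lemma In_0 [simp]: "0 \<in> In n"
  using InI[of 0 n 0 0] by simp

lemma In_uminus: "p \<in> In n \<Longrightarrow> - p \<in> In n"
  using In_mult_left[of p n "-1"] by simp

lemma In_diff: "p \<in> In n \<Longrightarrow> q \<in> In n \<Longrightarrow> p - q \<in> In n"
  by (metis In_add In_uminus diff_conv_add_uminus)

lemma In_sum: "(\<And>x. x \<in> A \<Longrightarrow> f x \<in> In n) \<Longrightarrow> (\<Sum>x\<in>A. f x) \<in> In n"
  by (induction A rule: infinite_finite_induct) (simp_all add: In_add)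

lemma In_gen_y: "Yv^(2*n+3) \<in> In n"
  using InI[of 1 n 0 0] by simp

lemma In_gen_xny2: "Xv^n * Yv^2 - Yv^(n+2) \<in> In n"
  using InI[of 0 n 1 0] by simp

lemma In_gen_x2n1: "Xv^(2*n+1) - Xv * Yv^(n+1) \<in> In n"
  using InI[of 0 n 0 1] by simp

(* Modulo I_n, h = x y^(n+3) = x^(2n+1) y^2 = x^(n+1) y^(n+2) = x y^(2n+2) = h y^(n-1),
   hence h = h y^(2n-2), which is a multiple of y^(2n+3). *)
lemma In_Xv_Yv_power:
  assumes "n \<ge> 2" shows "Xv * Yv^(n+3) \<in> In n"
proof -
  obtain m where n: "n = m + 2" using assms by (metis add.commute le_Suc_ex)
  have "Xv * Yv^(n+3) =
      ((Xv^(n+1) + Xv * Yv^n) * (Xv^n * Yv^2 - Yv^(n+2)) - Yv^2 * (Xv^(2*n+1) - Xv * Yv^(n+1)))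
        * (1 + Yv^(n-1)) + Xv * Yv^(n-2) * Yv^(2*n+3)"
    unfolding n by (simp add: algebra_simps power_add mult_2 eval_nat_numeral)
  also have "\<dots> \<in> In n"
    by (intro In_add In_diff In_mult_left In_mult_right In_gen_y In_gen_xny2 In_gen_x2n1)
  finally show ?thesis .
qed

lemma In_Xv_power_Yv_cube:
  assumes "n \<ge> 2" shows "Xv^(n+1) * Yv^3 \<in> In n"
proof -
  have "Xv^(n+1) * Yv^3 = Xv * Yv^(n+3) + Xv * Yv * (Xv^n * Yv^2 - Yv^(n+2))"
    by (simp add: algebra_simps power_add eval_nat_numeral)
  also have "\<dots> \<in> In n"
    by (intro In_add In_mult_left In_Xv_Yv_power assms In_gen_xny2)
  finally show ?thesis .
qed

lemma In_Xv_power: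
  assumes "n \<ge> 2" shows "Xv^(3*n+1) \<in> In n"
proof -
  obtain m where n: "n = m + 2" using assms by (metis add.commute le_Suc_ex)
  have "Xv^(3*n+1) = Xv^n * (Xv^(2*n+1) - Xv * Yv^(n+1))
      + Xv * Yv^(n-1) * (Xv^n * Yv^2 - Yv^(n+2)) + Yv^(n-2) * (Xv * Yv^(n+3))"
    unfolding n by (simp add: algebra_simps power_add mult_2 eval_nat_numeral)
  also have "\<dots> \<in> In n"
    by (intro In_add In_mult_left In_Xv_Yv_power assms In_gen_xny2 In_gen_x2n1)
  finally show ?thesis .
qed

definition In_exponent :: "nat \<Rightarrow> nat \<Rightarrow> nat \<Rightarrow> bool" where
  "In_exponent n i j \<longleftrightarrow>
     2*n+3 \<le> j \<or> (1 \<le> i \<and> n+3 \<le> j) \<or> 3*n+1 \<le> i \<or> (n+1 \<le> i \<and> 3 \<le> j)"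

lemma In_monomial_multiple:
  assumes "k \<le> i" "l \<le> j" "Xv^k * Yv^l \<in> (In n :: 'a::field poly poly set)"
  shows "Xv^i * Yv^j \<in> (In n :: 'a::field poly poly set)"
proof -
  obtain i' j' where "i = k + i'" "j = l + j'" using assms(1,2) le_Suc_ex by blast
  then have "Xv^i * Yv^j = (Xv^i' * Yv^j') * (Xv^k * Yv^l :: 'a poly poly)"
    by (simp add: power_add ac_simps)
  also have "\<dots> \<in> In n" by (rule In_mult_left[OF assms(3)])
  finally show ?thesis .
qed

lemma In_monomial:
  assumes "n \<ge> 2" "In_exponent n i j"
  shows "Xv^i * Yv^j \<in> In n"
  using assms(2) unfolding In_exponent_def
proof (elim disjE conjE)
  assume "2*n+3 \<le> j" then show ?thesis
    using In_monomial_multiple[of 0 i "2*n+3" j n] In_gen_y[of n] by simp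
next
  assume "1 \<le> i" "n+3 \<le> j" then show ?thesis
    using In_monomial_multiple[of 1 i "n+3" j n] In_Xv_Yv_power[OF assms(1)] by simp
next
  assume "3*n+1 \<le> i" then show ?thesis
    using In_monomial_multiple[of "3*n+1" i 0 j n] In_Xv_power[OF assms(1)] by simp
next
  assume "n+1 \<le> i" "3 \<le> j" then show ?thesis
    using In_monomial_multiple[of "n+1" i 3 j n] In_Xv_power_Yv_cube[OF assms(1)] by simp
qed

lemma monomial_expansion:
  "p = (\<Sum>j\<le>degree p. \<Sum>i\<le>degree (coeff p j). cst (coeff2 p i j) * (Xv^i * Yv^j))"
proof -
  have monom: "cst c * (Xv^i * Yv^j) = [:monom c i:] * monom 1 j" for c :: 'a and i j
    by (simp add: cst_def Xv_power Yv_power monom_altdef algebra_simps const_poly_mult)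
  have "p = (\<Sum>j\<le>degree p. monom (coeff p j) j)"
    by (simp add: poly_as_sum_of_monoms)
  also have "\<dots> = (\<Sum>j\<le>degree p. [:coeff p j:] * monom 1 j)"
    by (simp add: const_poly_mult smult_monom)
  also have "\<dots>
      = (\<Sum>j\<le>degree p. [:\<Sum>i\<le>degree (coeff p j). monom (coeff (coeff p j) i) i:] * monom 1 j)"
    by (simp add: poly_as_sum_of_monoms)
  also have "\<dots> = (\<Sum>j\<le>degree p. \<Sum>i\<le>degree (coeff p j). cst (coeff2 p i j) * (Xv^i * Yv^j))"
    by (simp add: monom sum_distrib_right coeff2_def flip: sum_to_poly)
  finally show ?thesis .
qed

lemma In_if_support_In_exponent:
  assumes "n \<ge> 2" "\<And>i j. coeff2 p i j \<noteq> 0 \<Longrightarrow> In_exponent n i j"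
  shows "p \<in> In n"
proof -
  have "cst (coeff2 p i j) * (Xv^i * Yv^j) \<in> In n" for i j
    by (cases "coeff2 p i j = 0") (simp_all add: assms In_monomial In_mult_left)
  then have "(\<Sum>j\<le>degree p. \<Sum>i\<le>degree (coeff p j). cst (coeff2 p i j) * (Xv^i * Yv^j)) \<in> In n"
    by (simp add: In_sum)
  then show ?thesis
    by (simp only: monomial_expansion[of p, symmetric])
qed

lemma In_coeff2_relations:
  assumes "p \<in> In n" "n \<ge> 2"
  shows In_val0: "val0 p = 0"
    and "coeff2 p 0 (n+2) + coeff2 p n 2 = 0"
    and "coeff2 p 1 (n+1) + coeff2 p (2*n+1) 0 = 0"
    and "coeff2 p (n+2) 1 = 0"
    and "coeff2 p 0 (n+3) + coeff2 p n 3 + (if n = 2 then coeff2 p 6 0 else 0) = 0"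
      \<comment> \<open>for \<open>n = 2\<close>, \<open>x (x\<^sup>5 - x y\<^sup>3)\<close> links \<open>x\<^sup>2 y\<^sup>3\<close> with \<open>x\<^sup>6\<close>\<close>
    and "coeff2 p 1 (n+2) + coeff2 p (n+1) 2 + coeff2 p (2*n+1) 1 = 0"
proof -
  obtain a b c where
    "p = a * Yv^(2*n+3) + b * (Xv^n * Yv^2 - Yv^(n+2)) + c * (Xv^(2*n+1) - Xv * Yv^(n+1))"
    using assms(1) by (rule InE)
  then have p: "p = Yv^(2*n+3) * a + Xv^n * (Yv^2 * b) - Yv^(n+2) * b
      + Xv^(2*n+1) * c - Xv * (Yv^(n+1) * c)"
    by (simp add: algebra_simps)
  note expand = p coeff2_add coeff2_diff coeff2_Xv_power_mult coeff2_Yv_power_mult coeff2_Xv_mult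
  show "val0 p = 0" unfolding val0_def expand by simp
  show "coeff2 p 0 (n+2) + coeff2 p n 2 = 0"
    and "coeff2 p 1 (n+1) + coeff2 p (2*n+1) 0 = 0"
    and "coeff2 p (n+2) 1 = 0"
    and "coeff2 p 1 (n+2) + coeff2 p (n+1) 2 + coeff2 p (2*n+1) 1 = 0"
    unfolding expand using assms(2) by simp_all
  show "coeff2 p 0 (n+3) + coeff2 p n 3 + (if n = 2 then coeff2 p 6 0 else 0) = 0"
    unfolding expand using assms(2) by auto
qed

lemma In_coeff_0_dvd:
  assumes "p \<in> In n"
  shows "[:0,1:]^(2*n+1) dvd coeff p 0"
proof -
  obtain a b c where p:
    "p = a * Yv^(2*n+3) + b * (Xv^n * Yv^2 - Yv^(n+2)) + c * (Xv^(2*n+1) - Xv * Yv^(n+1))"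
    using assms by (rule InE)
  have "coeff p 0 = coeff c 0 * [:0,1:]^(2*n+1)"
    unfolding p by (simp add: coeff_mult_0 Xv_power Yv_power monom_altdef coeff_0_power
        Xv_def flip: power_Suc)
  then show ?thesis by (metis dvd_triv_right)
qed

section \<open>The images of \<open>x\<close> and \<open>y\<close>\<close>

lemma relations_at_y0_imp_coeff_1_eq_0:
  fixes u v :: "'a::field poly"
  assumes n: "n \<ge> 2" and u0: "coeff u 0 = 0" and v0: "coeff v 0 = 0"
    and rel_x2n1: "[:0,1:]^(2*n+1) dvd u^(2*n+1) - u * v^(n+1)"
    and rel_xny2: "[:0,1:]^(2*n+1) dvd u^n * v^2 - v^(n+2)"
  shows "coeff v 1 = 0"
proof (rule ccontr)
  assume "coeff v 1 \<noteq> 0"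
  then have "v \<noteq> 0" and ord_v: "order 0 v = 1" using v0 order_0_eq_1 by auto
  have "[:0,1:] dvd u" using u0 by (simp add: dvd_iff_poly_eq_0 poly_0_coeff_0)
  then have "[:0,1:]^(2*n+1) dvd u^(2*n+1)" by (rule dvd_power_same)
  from dvd_diff[OF this rel_x2n1] have uv: "[:0,1:]^(2*n+1) dvd u * v^(n+1)" by simp
  have "[:0,1:]^(2*n+1) dvd u^n * v^2"
  proof (cases "u = 0")
    case True
    then show ?thesis using n by (simp add: zero_power)
  next
    case False
    then have "u * v^(n+1) \<noteq> 0" using \<open>v \<noteq> 0\<close> by simp
    then have "2*n+1 \<le> order 0 (u * v^(n+1))" using uv X_power_dvd_iff_order by blast
    then have "2*n+1 \<le> order 0 u + (n+1)"
      using False \<open>v \<noteq> 0\<close> ord_v by (simp add: order_mult order_power)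
    then have "n*n + 2 \<le> n * order 0 u + 2" by simp
    moreover have "2*n+1 \<le> n*n + 2" using n
      by (metis add_le_mono mult_le_mono1 mult_2 one_le_numeral)
    moreover have "order 0 (u^n * v^2) = n * order 0 u + 2"
      using False \<open>v \<noteq> 0\<close> ord_v by (simp add: order_mult order_power)
    ultimately have "2*n+1 \<le> order 0 (u^n * v^2)" by linarith
    then show ?thesis using X_power_dvd_iff_order by blast
  qed
  from dvd_diff[OF this rel_xny2] have "[:0,1:]^(2*n+1) dvd v^(n+2)" by simp
  moreover have "order 0 (v^(n+2)) = n+2" by (simp only: order_power[OF \<open>v \<noteq> 0\<close>] ord_v) simp
  moreover have "v^(n+2) \<noteq> 0" using \<open>v \<noteq> 0\<close> by simp
  ultimately have "2*n+1 \<le> n+2" using X_power_dvd_iff_order by metis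
  then show False using n by simp
qed

lemma constant_relations_solution:
  fixes a d :: "'a::field"
  assumes n: "n \<ge> 2" and "d \<noteq> 0"
    and rel_xny2: "a^n * d^2 = d^(n+2)" and rel_x2n1: "a^(2*n+1) = a * d^(n+1)"
  shows "d^n = d" "a^n = d" "a^(2*n) = d^2"
proof -
  have dn: "d^n = d * d^(n-1)" using n by (simp flip: power_Suc)
  have an2: "a^n = d^n" using rel_xny2 \<open>d \<noteq> 0\<close> by (simp add: power_add power2_eq_square)
  then have "a \<noteq> 0" using \<open>d \<noteq> 0\<close> n by (auto simp: zero_power)
  then have a2n: "a^(2*n) = d^(n+1)" using rel_x2n1 by simp
  have "(n+1) + (n-1) = 2*n" using n by simp
  then have "d^(n+1) * d^(n-1) = d^(2*n)" by (metis power_add)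
  also have "\<dots> = (a^n)^2" by (simp add: an2 power_mult[symmetric] mult.commute)
  also have "\<dots> = a^(2*n)" by (simp add: power_mult[symmetric] mult.commute)
  also have "\<dots> = d^(n+1) * 1" using a2n by simp
  finally have "d^(n-1) = 1" using \<open>d \<noteq> 0\<close> by simp
  then show dn': "d^n = d" using dn by simp
  then show "a^n = d" using an2 by simp
  show "a^(2*n) = d^2" using a2n dn' by (simp add: power2_eq_square)
qed

(* a, d, s, e stand for the values at 0 of alpha, delta, d/dy alpha, d/dy delta; the hypotheses
   are the constant and y-linear parts of the two relations. *)
lemma linear_relations_solution:
  fixes a d s e :: "'a::field"
  assumes n: "n \<ge> 2" and d0: "d \<noteq> 0"
    and n_nz: "(of_nat n :: 'a) \<noteq> 0" and n1_nz: "(of_nat (n - 1) :: 'a) \<noteq> 0"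
    and rel_xny2: "a^n * d^2 = d^(n+2)" and rel_x2n1: "a^(2*n+1) = a * d^(n+1)"
    and rel_xny2': "of_nat n * a^(n-1) * s * d^2 + a^n * (2 * d * e) = of_nat (n+2) * d^(n+1) * e"
    and rel_x2n1': "of_nat (2*n+1) * a^(2*n) * s = s * d^(n+1) + a * (of_nat (n+1) * d^n * e)"
  shows "e = 0"
proof -
  define N :: 'a where "N = of_nat n"
  define A where "A = a^(n-1)"
  note sol = constant_relations_solution[OF n d0 rel_xny2 rel_x2n1]
  have an: "a^n = a * A" unfolding A_def using n by (simp flip: power_Suc)
  have aA: "a * A = d" using an sol(2) by simp
  have dn1: "d^(n+1) = d^2" using sol(1) by (simp add: power2_eq_square)
  have nat_casts: "(of_nat (n+2) :: 'a) = N + 2" "(of_nat (n+1) :: 'a) = N + 1"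
    "(of_nat (2*n+1) :: 'a) = 2*N + 1" "(of_nat (n-1) :: 'a) = N - 1"
    unfolding N_def using n by (simp_all add: of_nat_diff)
  have "N * d^2 * (A * s - e) = 0"
    using rel_xny2' unfolding N_def[symmetric] nat_casts A_def[symmetric] dn1 an aA
    by (simp add: algebra_simps power2_eq_square)
  then have As: "A * s = e" using n_nz d0 unfolding N_def by simp
  have "d * (2*N*d*s - (N+1)*a*e) = 0"
    using rel_x2n1' unfolding nat_casts sol(3) dn1 sol(1)
    by (simp add: algebra_simps power2_eq_square)
  then have "2*N*d*s = (N+1)*a*e" using d0 by simp
  then have "2*N*d*(A*s) = (N+1)*(a*A)*e" by (metis mult.assoc mult.left_commute)
  then have "(N - 1) * d * e = 0" unfolding As aA by (simp add: algebra_simps)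
  moreover have "N - 1 \<noteq> 0" using n1_nz nat_casts(4) by simp
  ultimately show "e = 0" using d0 by simp
qed

lemma rel_x2n1_val0_beta:
  fixes u v \<alpha> \<beta> \<epsilon> \<delta> :: "'a::field poly poly"
  assumes n: "n \<ge> 2" and rel: "u^(2*n+1) - u * v^(n+1) \<in> In n"
    and u: "u = Xv*\<alpha> + Yv*\<beta>" and v: "v = Xv^2*\<epsilon> + Yv*\<delta>"
  shows "val0 \<beta> * val0 \<delta>^(n+1) = 0"
proof -
  have w: "wt_ord_ge 1 1 1 u" "wt_ord_ge 1 1 1 v" "wt_ord_ge 1 1 1 (Yv*\<delta>)"
      "wt_ord_ge 1 1 2 (v - Yv*\<delta>)"
    by (auto simp: u v intro!: wt_ord_ge_intros)
  define E1 where "E1 = u^(2*n+1)"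
  define E2 where "E2 = u * (v^(n+1) - (Yv*\<delta>)^(n+1))"
  have wE1: "wt_ord_ge 1 1 (2*n+1) E1"
    unfolding E1_def by (rule wt_ord_ge_mono[OF wt_ord_ge_power[OF w(1)]]) simp
  have wE2: "wt_ord_ge 1 1 (n+3) E2"
    unfolding E2_def
    by (rule wt_ord_ge_mono[OF wt_ord_ge_mult[OF w(1)
        wt_ord_ge_power_diff[OF w(2-4), of "n+1"]]]) simp
  have eq: "u^(2*n+1) - u * v^(n+1) = E1
      - (Xv * (Yv^(n+1) * (\<alpha> * \<delta>^(n+1))) + Yv^(n+2) * (\<beta> * \<delta>^(n+1))) - E2"
    unfolding E1_def E2_def u by (simp add: algebra_simps power_mult_distrib)
  from In_coeff2_relations(2)[OF rel n]
  have "coeff2 E1 0 (n+2) - val0 (\<beta> * \<delta>^(n+1)) - coeff2 E2 0 (n+2)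
      + (coeff2 E1 n 2 - coeff2 E2 n 2) = 0"
    unfolding eq coeff2_add coeff2_diff coeff2_Xv_mult coeff2_Yv_power_mult using n
    by (simp add: val0_def)
  moreover have "coeff2 E1 0 (n+2) = 0" "coeff2 E1 n 2 = 0" "coeff2 E2 0 (n+2) = 0"
      "coeff2 E2 n 2 = 0"
    using n wE1 wE2 by (auto intro: coeff2_eq_0_if_wt_ord_ge)
  ultimately show ?thesis by (simp add: val0_mult val0_power)
qed

lemma rel_xny2_val0:
  fixes u v \<alpha> \<beta> \<epsilon> \<delta> :: "'a::field poly poly"
  assumes n: "n \<ge> 2" and rel: "u^n * v^2 - v^(n+2) \<in> In n"
    and u: "u = Xv*\<alpha> + Yv^2*\<beta>" and v: "v = Xv^2*\<epsilon> + Yv*\<delta>"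
  shows "val0 \<alpha>^n * val0 \<delta>^2 = val0 \<delta>^(n+2)"
proof -
  have w11: "wt_ord_ge 1 1 1 u" "wt_ord_ge 1 1 1 (Xv*\<alpha>)" "wt_ord_ge 1 1 2 (u - Xv*\<alpha>)"
      "wt_ord_ge 1 1 1 v" "wt_ord_ge 1 1 1 (Yv*\<delta>)" "wt_ord_ge 1 1 2 (v - Yv*\<delta>)"
    and w10: "wt_ord_ge 1 0 1 (Xv*\<alpha>)" "wt_ord_ge 1 0 0 v" "wt_ord_ge 1 0 0 (Yv*\<delta>)"
      "wt_ord_ge 1 0 2 (v - Yv*\<delta>)"
    by (auto simp: u v intro!: wt_ord_ge_intros)
  define Ta where "Ta = (Xv*\<alpha>)^n * (v^2 - (Yv*\<delta>)^2)"
  define Tb where "Tb = (u^n - (Xv*\<alpha>)^n) * v^2"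
  define Tc where "Tc = v^(n+2) - (Yv*\<delta>)^(n+2)"
  have wTa: "wt_ord_ge 1 0 (n+2) Ta" unfolding Ta_def
    by (rule wt_ord_ge_mono[OF wt_ord_ge_mult[OF wt_ord_ge_power[OF w10(1)]
          wt_ord_ge_power_diff[OF w10(2-4), of 2]]]) simp
  have wTb: "wt_ord_ge 1 1 (n+3) Tb" unfolding Tb_def
    by (rule wt_ord_ge_mono[OF wt_ord_ge_mult[OF wt_ord_ge_power_diff[OF w11(1-3), of n]
          wt_ord_ge_power[OF w11(4), of 2]]]) (use n in simp)
  have wTc: "wt_ord_ge 1 1 (n+3) Tc" unfolding Tc_def
    by (rule wt_ord_ge_mono[OF wt_ord_ge_power_diff[OF w11(4-6), of "n+2"]]) simp
  have eq: "u^n * v^2 - v^(n+2) = Xv^n * (Yv^2 * (\<alpha>^n * \<delta>^2)) + Ta + Tb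
      - (Yv^(n+2) * \<delta>^(n+2) + Tc)"
    unfolding Ta_def Tb_def Tc_def by (simp add: algebra_simps power_mult_distrib)
  from In_coeff2_relations(2)[OF rel n]
  have "coeff2 Ta 0 (n+2) + coeff2 Tb 0 (n+2) - (val0 (\<delta>^(n+2)) + coeff2 Tc 0 (n+2))
      + (val0 (\<alpha>^n * \<delta>^2) + coeff2 Ta n 2 + coeff2 Tb n 2 - coeff2 Tc n 2) = 0"
    unfolding eq coeff2_add coeff2_diff coeff2_Xv_power_mult coeff2_Yv_power_mult using n
    by (simp add: val0_def)
  moreover have "coeff2 Ta 0 (n+2) = 0" "coeff2 Ta n 2 = 0" "coeff2 Tb 0 (n+2) = 0"
      "coeff2 Tb n 2 = 0"
    "coeff2 Tc 0 (n+2) = 0" "coeff2 Tc n 2 = 0"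
    using n wTa wTb wTc by (auto intro: coeff2_eq_0_if_wt_ord_ge)
  ultimately show ?thesis by (simp add: val0_mult val0_power)
qed

lemma rel_x2n1_val0:
  fixes u v \<alpha> \<beta> \<epsilon> \<delta> :: "'a::field poly poly"
  assumes n: "n \<ge> 2" and rel: "u^(2*n+1) - u * v^(n+1) \<in> In n"
    and u: "u = Xv*\<alpha> + Yv^2*\<beta>" and v: "v = Xv^2*\<epsilon> + Yv*\<delta>"
  shows "val0 \<alpha>^(2*n+1) = val0 \<alpha> * val0 \<delta>^(n+1)"
proof -
  have w11: "wt_ord_ge 1 1 1 u" "wt_ord_ge 1 1 1 (Xv*\<alpha>)" "wt_ord_ge 1 1 2 (u - Xv*\<alpha>)"
    and w01: "wt_ord_ge 0 1 0 u" "wt_ord_ge 0 1 0 (Xv*\<alpha>)" "wt_ord_ge 0 1 2 (u - Xv*\<alpha>)"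
    and w10: "wt_ord_ge 1 0 0 u" "wt_ord_ge 1 0 0 v" "wt_ord_ge 1 0 0 (Yv*\<delta>)"
      "wt_ord_ge 1 0 2 (v - Yv*\<delta>)"
    and w12: "wt_ord_ge 1 2 1 u" "wt_ord_ge 1 2 2 v" "wt_ord_ge 1 2 2 (Yv*\<delta>)"
      "wt_ord_ge 1 2 2 (v - Yv*\<delta>)"
    by (auto simp: u v intro!: wt_ord_ge_intros)
  define E1 where "E1 = u^(2*n+1) - (Xv*\<alpha>)^(2*n+1)"
  define E2 where "E2 = u * (v^(n+1) - (Yv*\<delta>)^(n+1))"
  have wE1: "wt_ord_ge 1 1 (2*n+2) E1" unfolding E1_def
    by (rule wt_ord_ge_mono[OF wt_ord_ge_power_diff[OF w11, of "2*n+1"]]) simp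
  have wE1': "wt_ord_ge 0 1 2 E1" unfolding E1_def
    by (rule wt_ord_ge_mono[OF wt_ord_ge_power_diff[OF w01, of "2*n+1"]]) simp
  have wE2: "wt_ord_ge 1 0 2 E2" unfolding E2_def
    by (rule wt_ord_ge_mono[OF wt_ord_ge_mult[OF w10(1)
        wt_ord_ge_power_diff[OF w10(2-4), of "n+1"]]]) simp
  have wE2': "wt_ord_ge 1 2 (2*n+3) E2" unfolding E2_def
    by (rule wt_ord_ge_mono[OF wt_ord_ge_mult[OF w12(1)
        wt_ord_ge_power_diff[OF w12(2-4), of "n+1"]]]) simp
  have eq: "u^(2*n+1) - u * v^(n+1) = Xv^(2*n+1) * \<alpha>^(2*n+1) + E1
      - (Xv * (Yv^(n+1) * (\<alpha> * \<delta>^(n+1))) + Yv^(n+3) * (\<beta> * \<delta>^(n+1)) + E2)"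
    unfolding E1_def E2_def u
    by (simp add: algebra_simps power_mult_distrib power_add eval_nat_numeral)
  from In_coeff2_relations(3)[OF rel n]
  have "coeff2 E1 1 (n+1) - (val0 (\<alpha> * \<delta>^(n+1)) + coeff2 E2 1 (n+1))
      + (val0 (\<alpha>^(2*n+1)) + coeff2 E1 (2*n+1) 0 - coeff2 E2 (2*n+1) 0) = 0"
    unfolding eq coeff2_add coeff2_diff coeff2_Xv_mult coeff2_Xv_power_mult coeff2_Yv_power_mult
    using n by (simp add: val0_def)
  moreover have "coeff2 E1 1 (n+1) = 0" "coeff2 E1 (2*n+1) 0 = 0"
      "coeff2 E2 1 (n+1) = 0" "coeff2 E2 (2*n+1) 0 = 0"
    using n wE1 wE1' wE2 wE2' by (auto intro: coeff2_eq_0_if_wt_ord_ge)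
  ultimately show ?thesis by (simp add: val0_mult val0_power)
qed

lemma rel_xny2_val0_eps:
  fixes u v \<alpha> \<beta> \<epsilon> \<delta> :: "'a::field poly poly"
  assumes n: "n \<ge> 2" and rel: "u^n * v^2 - v^(n+2) \<in> In n"
    and u: "u = Xv*\<alpha> + Yv^2*\<beta>" and v: "v = Xv^2*\<epsilon> + Yv*\<delta>"
  shows "2 * val0 \<alpha>^n * val0 \<epsilon> * val0 \<delta> = 0"
proof -
  have w01: "wt_ord_ge 0 1 0 u" "wt_ord_ge 0 1 0 (Xv*\<alpha>)" "wt_ord_ge 0 1 2 (u - Xv*\<alpha>)"
    and w12: "wt_ord_ge 1 2 2 v" "wt_ord_ge 1 2 2 (Yv*\<delta>)" "wt_ord_ge 1 2 2 (v - Yv*\<delta>)"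
    by (auto simp: u v intro!: wt_ord_ge_intros)
  define Tb where "Tb = (u^n - (Xv*\<alpha>)^n) * v^2"
  define Tc where "Tc = v^(n+2) - (Yv*\<delta>)^(n+2)"
  have wTb: "wt_ord_ge 0 1 2 Tb" unfolding Tb_def
    by (rule wt_ord_ge_mono[OF wt_ord_ge_mult[OF
        wt_ord_ge_power_diff[OF w01, of n] wt_ord_ge_0]]) simp
  have wTc: "wt_ord_ge 1 2 (2*n+4) Tc" unfolding Tc_def
    by (rule wt_ord_ge_mono[OF wt_ord_ge_power_diff[OF w12, of "n+2"]]) simp
  have eq: "u^n * v^2 - v^(n+2) = Xv^(n+4) * (\<alpha>^n * \<epsilon>^2) + Xv^(n+2) * (Yv * (\<alpha>^n * \<epsilon> * \<delta>))
      + Xv^(n+2) * (Yv * (\<alpha>^n * \<epsilon> * \<delta>)) + Xv^n * (Yv^2 * (\<alpha>^n * \<delta>^2)) + Tb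
      - (Yv^(n+2) * \<delta>^(n+2) + Tc)"
    unfolding Tb_def Tc_def v
    by (simp add: algebra_simps power_mult_distrib power2_eq_square power_add eval_nat_numeral)
  from In_coeff2_relations(4)[OF rel n]
  have "val0 (\<alpha>^n * \<epsilon> * \<delta>) + val0 (\<alpha>^n * \<epsilon> * \<delta>) + coeff2 Tb (n+2) 1 - coeff2 Tc (n+2) 1 = 0"
    unfolding eq coeff2_add coeff2_diff coeff2_Xv_power_mult coeff2_Yv_power_mult coeff2_Yv_mult
    using n by (simp add: val0_def)
  moreover have "coeff2 Tb (n+2) 1 = 0" "coeff2 Tc (n+2) 1 = 0"
    using n wTb wTc by (auto intro: coeff2_eq_0_if_wt_ord_ge)
  ultimately show ?thesis by (simp add: val0_mult val0_power algebra_simps)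
qed

lemma rel_xny2_dy0:
  fixes u v \<alpha> \<beta> \<epsilon> \<delta> :: "'a::field poly poly"
  assumes n: "n \<ge> 2" and rel: "u^n * v^2 - v^(n+2) \<in> In n"
    and u: "u = Xv*\<alpha> + Yv^2*\<beta>" and v: "v = Xv^3*\<epsilon> + Yv*\<delta>"
  shows "dy0 (\<alpha>^n * \<delta>^2) = dy0 (\<delta>^(n+2))"
proof -
  have w01: "wt_ord_ge 0 1 0 u" "wt_ord_ge 0 1 0 (Xv*\<alpha>)" "wt_ord_ge 0 1 2 (u - Xv*\<alpha>)"
    and w21: "wt_ord_ge 2 1 2 u" "wt_ord_ge 2 1 2 (Xv*\<alpha>)" "wt_ord_ge 2 1 2 (u - Xv*\<alpha>)"
      "wt_ord_ge 2 1 1 v"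
    and w12: "wt_ord_ge 1 2 1 u" "wt_ord_ge 1 2 1 (Xv*\<alpha>)" "wt_ord_ge 1 2 4 (u - Xv*\<alpha>)"
      "wt_ord_ge 1 2 2 v" "wt_ord_ge 1 2 2 (Yv*\<delta>)" "wt_ord_ge 1 2 3 (v - Yv*\<delta>)"
    and w10: "wt_ord_ge 1 0 0 v" "wt_ord_ge 1 0 0 (Yv*\<delta>)" "wt_ord_ge 1 0 3 (v - Yv*\<delta>)"
    by (auto simp: u v intro!: wt_ord_ge_intros)
  define Tb where "Tb = (u^n - (Xv*\<alpha>)^n) * v^2"
  define Tc where "Tc = v^(n+2) - (Yv*\<delta>)^(n+2)"
  have wTb1: "wt_ord_ge 0 1 2 Tb" unfolding Tb_def
    by (rule wt_ord_ge_mono[OF wt_ord_ge_mult[OF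
        wt_ord_ge_power_diff[OF w01, of n] wt_ord_ge_0]]) simp
  have wTb2: "wt_ord_ge 2 1 (2*n+2) Tb" unfolding Tb_def
    by (rule wt_ord_ge_mono[OF wt_ord_ge_mult[OF wt_ord_ge_power_diff[OF w21(1-3), of n]
          wt_ord_ge_power[OF w21(4), of 2]]]) (use n in simp)
  have wTb3: "wt_ord_ge 1 2 (n+7) Tb" unfolding Tb_def
    by (rule wt_ord_ge_mono[OF wt_ord_ge_mult[OF wt_ord_ge_power_diff[OF w12(1-3), of n]
          wt_ord_ge_power[OF w12(4), of 2]]]) (use n in simp)
  have wTc1: "wt_ord_ge 1 0 3 Tc" unfolding Tc_def
    by (rule wt_ord_ge_mono[OF wt_ord_ge_power_diff[OF w10, of "n+2"]]) simp
  have wTc2: "wt_ord_ge 1 2 (2*n+5) Tc" unfolding Tc_def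
    by (rule wt_ord_ge_mono[OF wt_ord_ge_power_diff[OF w12(4-6), of "n+2"]]) simp
  have eq: "u^n * v^2 - v^(n+2) = Xv^(n+6) * (\<alpha>^n * \<epsilon>^2) + Xv^(n+3) * (Yv * (\<alpha>^n * \<epsilon> * \<delta>))
      + Xv^(n+3) * (Yv * (\<alpha>^n * \<epsilon> * \<delta>)) + Xv^n * (Yv^2 * (\<alpha>^n * \<delta>^2)) + Tb
      - (Yv^(n+2) * \<delta>^(n+2) + Tc)"
    unfolding Tb_def Tc_def v
    by (simp add: algebra_simps power_mult_distrib power2_eq_square power_add eval_nat_numeral)
  from In_coeff2_relations(5)[OF rel n]
  have "coeff2 Tb 0 (n+3) - (dy0 (\<delta>^(n+2)) + coeff2 Tc 0 (n+3))
      + (dy0 (\<alpha>^n * \<delta>^2) + coeff2 Tb n 3 - coeff2 Tc n 3)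
      + (if n = 2 then coeff2 Tb 6 0 - coeff2 Tc 6 0 else 0) = 0"
    unfolding eq coeff2_add coeff2_diff coeff2_Xv_mult coeff2_Xv_power_mult coeff2_Yv_power_mult
      coeff2_Yv_mult
    using n by (cases "n = 2") (simp_all add: dy0_def)
  moreover have "coeff2 Tb 0 (n+3) = 0" "coeff2 Tb n 3 = 0" "coeff2 Tb 6 0 = 0"
      "coeff2 Tc 0 (n+3) = 0" "coeff2 Tc n 3 = 0" "n = 2 \<Longrightarrow> coeff2 Tc 6 0 = 0"
    using n wTb1 wTb2 wTb3 wTc1 wTc2 by (auto intro: coeff2_eq_0_if_wt_ord_ge)
  ultimately show ?thesis by (simp split: if_splits)
qed

lemma rel_x2n1_dy0:
  fixes u v \<alpha> \<beta> \<epsilon> \<delta> :: "'a::field poly poly"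
  assumes n: "n \<ge> 2" and rel: "u^(2*n+1) - u * v^(n+1) \<in> In n"
    and u: "u = Xv*\<alpha> + Yv^2*\<beta>" and v: "v = Xv^3*\<epsilon> + Yv*\<delta>"
  shows "dy0 (\<alpha>^(2*n+1)) = dy0 (\<alpha> * \<delta>^(n+1))"
proof -
  have w01: "wt_ord_ge 0 1 0 u" "wt_ord_ge 0 1 0 (Xv*\<alpha>)" "wt_ord_ge 0 1 2 (u - Xv*\<alpha>)"
    and w21: "wt_ord_ge 2 1 2 u" "wt_ord_ge 2 1 2 (Xv*\<alpha>)" "wt_ord_ge 2 1 2 (u - Xv*\<alpha>)"
    and w10: "wt_ord_ge 1 0 0 u" "wt_ord_ge 1 0 0 v" "wt_ord_ge 1 0 0 (Yv*\<delta>)"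
      "wt_ord_ge 1 0 3 (v - Yv*\<delta>)"
    and w12: "wt_ord_ge 1 2 1 u" "wt_ord_ge 1 2 2 v" "wt_ord_ge 1 2 2 (Yv*\<delta>)"
      "wt_ord_ge 1 2 3 (v - Yv*\<delta>)"
    by (auto simp: u v intro!: wt_ord_ge_intros)
  define E1 where "E1 = u^(2*n+1) - (Xv*\<alpha>)^(2*n+1)"
  define E2 where "E2 = u * (v^(n+1) - (Yv*\<delta>)^(n+1))"
  have wE1a: "wt_ord_ge 2 1 (4*n+2) E1" unfolding E1_def
    by (rule wt_ord_ge_mono[OF wt_ord_ge_power_diff[OF w21, of "2*n+1"]]) simp
  have wE1b: "wt_ord_ge 0 1 2 E1" unfolding E1_def
    by (rule wt_ord_ge_mono[OF wt_ord_ge_power_diff[OF w01, of "2*n+1"]]) simp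
  have wE2a: "wt_ord_ge 1 0 3 E2" unfolding E2_def
    by (rule wt_ord_ge_mono[OF wt_ord_ge_mult[OF w10(1)
        wt_ord_ge_power_diff[OF w10(2-4), of "n+1"]]]) simp
  have wE2b: "wt_ord_ge 1 2 (2*n+4) E2" unfolding E2_def
    by (rule wt_ord_ge_mono[OF wt_ord_ge_mult[OF w12(1)
        wt_ord_ge_power_diff[OF w12(2-4), of "n+1"]]]) simp
  have eq: "u^(2*n+1) - u * v^(n+1) = Xv^(2*n+1) * \<alpha>^(2*n+1) + E1
      - (Xv * (Yv^(n+1) * (\<alpha> * \<delta>^(n+1))) + Yv^(n+3) * (\<beta> * \<delta>^(n+1)) + E2)"
    unfolding E1_def E2_def u
    by (simp add: algebra_simps power_mult_distrib power_add eval_nat_numeral)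
  from In_coeff2_relations(6)[OF rel n]
  have "coeff2 E1 1 (n+2) - (dy0 (\<alpha> * \<delta>^(n+1)) + coeff2 E2 1 (n+2))
      + (coeff2 E1 (n+1) 2 - coeff2 E2 (n+1) 2)
      + (dy0 (\<alpha>^(2*n+1)) + coeff2 E1 (2*n+1) 1 - coeff2 E2 (2*n+1) 1) = 0"
    unfolding eq coeff2_add coeff2_diff coeff2_Xv_mult coeff2_Xv_power_mult coeff2_Yv_power_mult
    using n by (simp add: dy0_def)
  moreover have "coeff2 E1 1 (n+2) = 0" "coeff2 E1 (n+1) 2 = 0" "coeff2 E1 (2*n+1) 1 = 0"
      "coeff2 E2 1 (n+2) = 0" "coeff2 E2 (n+1) 2 = 0" "coeff2 E2 (2*n+1) 1 = 0"
    using n wE1a wE1b wE2a wE2b by (auto intro: coeff2_eq_0_if_wt_ord_ge)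
  ultimately show ?thesis by simp
qed

lemma power_In_if_wt_ord_ge_2:
  assumes n: "n \<ge> 2" and v: "wt_ord_ge 1 1 2 v"
  shows "v^(2*n+1) \<in> In n"
proof (rule In_if_support_In_exponent[OF n])
  fix i j
  assume "coeff2 (v^(2*n+1)) i j \<noteq> 0"
  then have "4*n+2 \<le> i + j"
    using wt_ord_ge_power[OF v, of "2*n+1"] unfolding wt_ord_ge_def by force
  then show "In_exponent n i j" unfolding In_exponent_def using n by presburger
qed

lemma power_congr_cst_Yv_power:
  fixes \<epsilon> \<delta> :: "'a::field poly poly"
  assumes n: "n \<ge> 2" and v: "v = Xv^3*\<epsilon> + Yv*\<delta>" and "dy0 \<delta> = 0"
  shows "v^(2*n+1) - cst (val0 \<delta> ^ (2*n+1)) * Yv^(2*n+1) \<in> In n"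
proof -
  define d where "d = val0 \<delta>"
  have "val0 (\<delta> - cst d) = 0" by (simp add: d_def val0_def)
  then obtain \<delta>1 \<delta>2 where \<delta>1: "\<delta> - cst d = Xv*\<delta>1 + Yv*\<delta>2" by (rule val0_eq_0E)
  have "dy0 (\<delta> - cst d) = 0" using \<open>dy0 \<delta> = 0\<close> by (simp add: dy0_def)
  then have "val0 \<delta>2 = 0" unfolding \<delta>1 by (simp add: dy0_def val0_def)
  then obtain \<delta>3 \<delta>4 where \<delta>2: "\<delta>2 = Xv*\<delta>3 + Yv*\<delta>4" by (rule val0_eq_0E)
  have v_minus: "v - cst d * Yv = Xv^3*\<epsilon> + Yv*(Xv*\<delta>1 + Yv*(Xv*\<delta>3 + Yv*\<delta>4))"
    unfolding v using \<delta>1 \<delta>2 by (simp add: algebra_simps)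
  have w11: "wt_ord_ge 1 1 1 v" "wt_ord_ge 1 1 1 (cst d * Yv)" "wt_ord_ge 1 1 2 (v - cst d * Yv)"
    and w12: "wt_ord_ge 1 2 2 v" "wt_ord_ge 1 2 2 (cst d * Yv)" "wt_ord_ge 1 2 3 (v - cst d * Yv)"
    and w21: "wt_ord_ge 2 1 1 v" "wt_ord_ge 2 1 1 (cst d * Yv)" "wt_ord_ge 2 1 3 (v - cst d * Yv)"
    unfolding v_minus by (auto simp: v intro!: wt_ord_ge_intros)
  define P where "P = v^(2*n+1) - (cst d * Yv)^(2*n+1)"
  have P11: "wt_ord_ge 1 1 (2*n+2) P" unfolding P_def
    by (rule wt_ord_ge_mono[OF wt_ord_ge_power_diff[OF w11, of "2*n+1"]]) simp
  have P12: "wt_ord_ge 1 2 (4*n+3) P" unfolding P_def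
    by (rule wt_ord_ge_mono[OF wt_ord_ge_power_diff[OF w12, of "2*n+1"]]) simp
  have P21: "wt_ord_ge 2 1 (2*n+3) P" unfolding P_def
    by (rule wt_ord_ge_mono[OF wt_ord_ge_power_diff[OF w21, of "2*n+1"]]) simp
  have P: "P \<in> In n"
  proof (rule In_if_support_In_exponent[OF n])
    fix i j
    assume "coeff2 P i j \<noteq> 0"
    then have "2*n+2 \<le> i+j" "4*n+3 \<le> i+2*j" "2*n+3 \<le> 2*i+j"
      using P11 P12 P21 unfolding wt_ord_ge_def by force+
    then show "In_exponent n i j" unfolding In_exponent_def using n by arith
  qed
  have "(cst d * Yv)^(2*n+1) = cst (d^(2*n+1)) * Yv^(2*n+1)"
    by (simp only: power_mult_distrib cst_power)
  with P show ?thesis unfolding P_def d_def by (simp only:)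
qed

lemma rels_imp_v_shape:
  fixes u v :: "'a::field poly poly"
  assumes n: "n \<ge> 2" and "val0 u = 0" "val0 v = 0"
    and rel_xny2: "u^n * v^2 - v^(n+2) \<in> In n" and rel_x2n1: "u^(2*n+1) - u * v^(n+1) \<in> In n"
  obtains \<epsilon> \<delta> where "v = Xv^2*\<epsilon> + Yv*\<delta>"
proof -
  have "coeff (coeff v 0) 1 = 0"
  proof (rule relations_at_y0_imp_coeff_1_eq_0[OF n])
    show "coeff (coeff u 0) 0 = 0" "coeff (coeff v 0) 0 = 0"
      using assms(2,3) by (simp_all add: val0_def coeff2_def)
    show "[:0,1:]^(2*n+1) dvd (coeff u 0)^(2*n+1) - coeff u 0 * (coeff v 0)^(n+1)"
      using In_coeff_0_dvd[OF rel_x2n1] by (simp add: coeff_0_power coeff_mult_0)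
    show "[:0,1:]^(2*n+1) dvd (coeff u 0)^n * (coeff v 0)^2 - (coeff v 0)^(n+2)"
      using In_coeff_0_dvd[OF rel_xny2] by (simp add: coeff_0_power coeff_mult_0)
  qed
  obtain \<gamma> \<delta> where v: "v = Xv*\<gamma> + Yv*\<delta>" using \<open>val0 v = 0\<close> by (rule val0_eq_0E)
  have "val0 \<gamma> = 0"
    using \<open>coeff (coeff v 0) 1 = 0\<close> unfolding v by (simp add: val0_def coeff2_def[symmetric])
  then obtain \<epsilon> \<gamma>' where "\<gamma> = Xv*\<epsilon> + Yv*\<gamma>'" by (rule val0_eq_0E)
  then have "v = Xv^2*\<epsilon> + Yv*(\<delta> + Xv*\<gamma>')"
    unfolding v by (simp add: algebra_simps power2_eq_square)
  then show ?thesis by (rule that)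
qed

lemma rels_imp_u_shape:
  fixes u v \<epsilon> \<delta> :: "'a::field poly poly"
  assumes n: "n \<ge> 2" and rel_x2n1: "u^(2*n+1) - u * v^(n+1) \<in> In n"
    and "val0 u = 0" and v: "v = Xv^2*\<epsilon> + Yv*\<delta>" and "val0 \<delta> \<noteq> 0"
  obtains \<alpha> \<beta> where "u = Xv*\<alpha> + Yv^2*\<beta>"
proof -
  obtain \<alpha> \<beta> where u: "u = Xv*\<alpha> + Yv*\<beta>" using \<open>val0 u = 0\<close> by (rule val0_eq_0E)
  have "val0 \<beta> = 0" using rel_x2n1_val0_beta[OF n rel_x2n1 u v] \<open>val0 \<delta> \<noteq> 0\<close> by simp
  then obtain \<beta>1 \<beta>2 where "\<beta> = Xv*\<beta>1 + Yv*\<beta>2" by (rule val0_eq_0E)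
  then have "u = Xv*(\<alpha> + Yv*\<beta>1) + Yv^2*\<beta>2"
    unfolding u by (simp add: algebra_simps power2_eq_square)
  then show ?thesis by (rule that)
qed

lemma rels_imp_v_shape_cubic:
  fixes u v \<alpha> \<beta> \<epsilon> \<delta> :: "'a::field poly poly"
  assumes n: "n \<ge> 2" and two: "(2::'a) \<noteq> 0" and rel_xny2: "u^n * v^2 - v^(n+2) \<in> In n"
    and u: "u = Xv*\<alpha> + Yv^2*\<beta>" and v: "v = Xv^2*\<epsilon> + Yv*\<delta>" and "val0 \<delta> \<noteq> 0"
  obtains \<epsilon>' \<delta>' where "v = Xv^3*\<epsilon>' + Yv*\<delta>'" "val0 \<delta>' = val0 \<delta>"
proof -
  have "val0 \<alpha>^n * val0 \<delta>^2 = val0 \<delta>^(n+2)" by (rule rel_xny2_val0[OF n rel_xny2 u v])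
  then have "val0 \<alpha> \<noteq> 0" using \<open>val0 \<delta> \<noteq> 0\<close> n by (auto simp: zero_power)
  then have "val0 \<epsilon> = 0" using rel_xny2_val0_eps[OF n rel_xny2 u v] two \<open>val0 \<delta> \<noteq> 0\<close> by simp
  then obtain \<epsilon>1 \<epsilon>2 where "\<epsilon> = Xv*\<epsilon>1 + Yv*\<epsilon>2" by (rule val0_eq_0E)
  then have "v = Xv^3*\<epsilon>1 + Yv*(\<delta> + Xv^2*\<epsilon>2)"
    unfolding v by (simp add: algebra_simps power2_eq_square eval_nat_numeral)
  moreover have "val0 (\<delta> + Xv^2*\<epsilon>2) = val0 \<delta>" by (simp add: val0_def)
  ultimately show ?thesis by (rule that)
qed

lemma rels_imp_dy0_eq_0:
  fixes u v \<alpha> \<beta> \<epsilon> \<delta> :: "'a::field poly poly"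
  assumes n: "n \<ge> 2" and "(of_nat n :: 'a) \<noteq> 0" "(of_nat (n - 1) :: 'a) \<noteq> 0"
    and rel_xny2: "u^n * v^2 - v^(n+2) \<in> In n" and rel_x2n1: "u^(2*n+1) - u * v^(n+1) \<in> In n"
    and u: "u = Xv*\<alpha> + Yv^2*\<beta>" and v: "v = Xv^3*\<epsilon> + Yv*\<delta>" and "val0 \<delta> \<noteq> 0"
  shows "dy0 \<delta> = 0"
proof (rule linear_relations_solution[OF n \<open>val0 \<delta> \<noteq> 0\<close> assms(2,3)])
  have v2: "v = Xv^2*(Xv*\<epsilon>) + Yv*\<delta>" unfolding v by (simp add: eval_nat_numeral algebra_simps)
  show "val0 \<alpha>^n * val0 \<delta>^2 = val0 \<delta>^(n+2)" by (rule rel_xny2_val0[OF n rel_xny2 u v2])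
  show "val0 \<alpha>^(2*n+1) = val0 \<alpha> * val0 \<delta>^(n+1)" by (rule rel_x2n1_val0[OF n rel_x2n1 u v2])
  show "of_nat n * val0 \<alpha>^(n-1) * dy0 \<alpha> * val0 \<delta>^2 + val0 \<alpha>^n * (2 * val0 \<delta> * dy0 \<delta>)
      = of_nat (n+2) * val0 \<delta>^(n+1) * dy0 \<delta>"
    using rel_xny2_dy0[OF n rel_xny2 u v] unfolding dy0_mult dy0_power val0_power by simp
  show "of_nat (2*n+1) * val0 \<alpha>^(2*n) * dy0 \<alpha>
      = dy0 \<alpha> * val0 \<delta>^(n+1) + val0 \<alpha> * (of_nat (n+1) * val0 \<delta>^n * dy0 \<delta>)"
    using rel_x2n1_dy0[OF n rel_x2n1 u v] unfolding dy0_mult dy0_power val0_power by simp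
qed

definition respects_relations :: "nat \<Rightarrow> 'a::field poly poly \<Rightarrow> 'a poly poly \<Rightarrow> bool" where
  "respects_relations n u v \<longleftrightarrow>
     v^(2*n+3) \<in> In n \<and> u^n * v^2 - v^(n+2) \<in> In n \<and> u^(2*n+1) - u * v^(n+1) \<in> In n"

lemma respects_relations_power_congr_Yv_power:
  fixes u v :: "'a::field poly poly"
  assumes n: "n \<ge> 2" and ch: "CHAR('a) = 0 \<or> (coprime CHAR('a) n \<and> coprime CHAR('a) (n - 1))"
    and "respects_relations n u v"
  obtains \<kappa> where "v^(2*n+1) - cst \<kappa> * Yv^(2*n+1) \<in> In n"
proof -
  have rel_y: "v^(2*n+3) \<in> In n" and rel_xny2: "u^n * v^2 - v^(n+2) \<in> In n"
    and rel_x2n1: "u^(2*n+1) - u * v^(n+1) \<in> In n"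
    using assms(3) by (simp_all add: respects_relations_def)
  have "val0 v = 0" using In_val0[OF rel_y n] unfolding val0_power by simp
  moreover from this have "val0 u = 0"
    using In_val0[OF rel_x2n1 n] unfolding val0_diff val0_mult val0_power by auto
  ultimately obtain \<epsilon> \<delta> where v: "v = Xv^2*\<epsilon> + Yv*\<delta>"
    using rels_imp_v_shape[OF n _ _ rel_xny2 rel_x2n1] by blast
  show ?thesis
  proof (cases "val0 \<delta> = 0")
    case True
    have "wt_ord_ge 1 1 2 v"
      using wt_ord_ge_if_val0_eq_0[OF True] by (auto simp: v intro!: wt_ord_ge_intros)
    then have "v^(2*n+1) - cst 0 * Yv^(2*n+1) \<in> In n" using power_In_if_wt_ord_ge_2[OF n] by simp
    then show ?thesis by (rule that)
  next
    case False
    obtain \<alpha> \<beta> where u: "u = Xv*\<alpha> + Yv^2*\<beta>"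
      using rels_imp_u_shape[OF n rel_x2n1 \<open>val0 u = 0\<close> v False] .
    obtain \<epsilon>' \<delta>' where v': "v = Xv^3*\<epsilon>' + Yv*\<delta>'" and "val0 \<delta>' = val0 \<delta>"
      using rels_imp_v_shape_cubic[OF n two_neq_0_if_CHAR_coprime[OF n ch] rel_xny2 u v False] .
    have "(of_nat n :: 'a) \<noteq> 0" by (rule of_nat_neq_0_if_CHAR_coprime) (use ch n in auto)
    moreover have "(of_nat (n - 1) :: 'a) \<noteq> 0"
      by (rule of_nat_neq_0_if_CHAR_coprime) (use ch n in auto)
    ultimately have "dy0 \<delta>' = 0"
      using rels_imp_dy0_eq_0[OF n _ _ rel_xny2 rel_x2n1 u v'] False \<open>val0 \<delta>' = val0 \<delta>\<close> by simp
    then show ?thesis using power_congr_cst_Yv_power[OF n v'] that by blast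
  qed
qed

section \<open>Automorphisms\<close>

lemma
  assumes "induces_aut n f"
  shows induces_aut_congr_In: "p - q \<in> In n \<Longrightarrow> f p - f q \<in> In n"
    and induces_aut_add: "f (p + q) - (f p + f q) \<in> In n"
    and induces_aut_mult: "f (p * q) - f p * f q \<in> In n"
    and induces_aut_1: "f 1 - 1 \<in> In n"
    and induces_aut_inj_mod_In: "f p - f q \<in> In n \<Longrightarrow> p - q \<in> In n"
  using assms unfolding induces_aut_def by blast+

lemma induces_aut_0:
  assumes "induces_aut n f"
  shows "f 0 \<in> In n"
proof -
  have "f (0 + 0) - (f 0 + f 0) \<in> In n" by (rule induces_aut_add[OF assms])
  then have "- f 0 \<in> In n" by simp
  from In_uminus[OF this] show ?thesis by simp
qed

lemma induces_aut_mult_congr: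
  assumes "induces_aut n f" "f p - P \<in> In n" "f q - Q \<in> In n"
  shows "f (p * q) - P * Q \<in> In n"
proof -
  have hom: "f (p * q) - f p * f q \<in> In n" by (rule induces_aut_mult[OF assms(1)])
  have "f (p * q) - P * Q = (f (p * q) - f p * f q) + f p * (f q - Q) + (f p - P) * Q"
    by (simp add: algebra_simps)
  also have "\<dots> \<in> In n"
    by (rule In_add[OF In_add[OF hom In_mult_left[OF assms(3)]] In_mult_right[OF assms(2)]])
  finally show ?thesis .
qed

lemma induces_aut_power_congr:
  assumes "induces_aut n f"
  shows "f (p ^ k) - f p ^ k \<in> In n"
proof (induction k)
  case 0
  then show ?case using induces_aut_1[OF assms] by simp
next
  case (Suc k)
  have "f p - f p \<in> In n" by simp
  from induces_aut_mult_congr[OF assms this Suc] show ?case by simp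
qed

lemma induces_aut_congr:
  assumes "induces_aut n f" "p - q \<in> In n" "f p - P \<in> In n" "f q - Q \<in> In n"
  shows "P - Q \<in> In n"
proof -
  have hom: "f p - f q \<in> In n" by (rule induces_aut_congr_In[OF assms(1,2)])
  have "P - Q = (f p - f q) - (f p - P) + (f q - Q)" by simp
  also have "\<dots> \<in> In n" by (rule In_add[OF In_diff[OF hom assms(3)] assms(4)])
  finally show ?thesis .
qed

lemma induces_aut_respects_relations:
  assumes f: "induces_aut n f"
  shows "respects_relations n (f Xv) (f Yv)"
  unfolding respects_relations_def
proof (intro conjI)
  have X: "f (Xv^k) - f Xv^k \<in> In n" and Y: "f (Yv^k) - f Yv^k \<in> In n" for k
    by (rule induces_aut_power_congr[OF f])+
  have X1: "f Xv - f Xv \<in> In n" by simp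
  have "Yv^(2*n+3) - 0 \<in> In n" "f 0 - 0 \<in> In n" using In_gen_y[of n] induces_aut_0[OF f]
    by simp_all
  from induces_aut_congr[OF f this(1) Y this(2)] show "f Yv^(2*n+3) \<in> In n" by simp
  show "f Xv^n * f Yv^2 - f Yv^(n+2) \<in> In n"
    by (rule induces_aut_congr[OF f In_gen_xny2 induces_aut_mult_congr[OF f X Y] Y])
  show "f Xv^(2*n+1) - f Xv * f Yv^(n+1) \<in> In n"
    by (rule induces_aut_congr[OF f In_gen_x2n1 X induces_aut_mult_congr[OF f X1 Y]])
qed

lemma mem_subspace_if_congr_scalar_multiple:
  assumes "lin_subspace U" "In n \<subseteq> U" "p \<in> U" "p - cst \<kappa> * q \<in> In n" "\<kappa> \<noteq> 0"
  shows "q \<in> U"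
proof -
  have "cst (1/\<kappa>) * cst \<kappa> = 1" using assms(5) by (simp flip: cst_mult)
  then have "q = cst (1/\<kappa>) * p + cst (- (1/\<kappa>)) * (p - cst \<kappa> * q)"
    by (simp add: cst_minus algebra_simps)
  also have "\<dots> \<in> U" using assms(1-4) unfolding lin_subspace_def by blast
  finally show ?thesis .
qed

lemma induces_aut_mem_subspace:
  assumes f: "induces_aut n f" and U: "lin_subspace U" "In n \<subseteq> U"
    and "f p \<in> U" and \<kappa>: "f p - cst \<kappa> * p \<in> In n"
  shows "p \<in> U"
proof (cases "\<kappa> = 0")
  case True
  then have "f p - f 0 \<in> In n" using \<kappa> In_diff[OF _ induces_aut_0[OF f]] by simp
  from induces_aut_inj_mod_In[OF f this] have "p \<in> In n" by simp
  then show ?thesis using U(2) by blast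
next
  case False
  show ?thesis by (rule mem_subspace_if_congr_scalar_multiple[OF U \<open>f p \<in> U\<close> \<kappa> False])
qed

theorem corollary1p2:
  fixes n :: nat and U1 U2 :: "'a::field poly poly set"
  assumes "n \<ge> 2"
    and "CHAR('a) = 0 \<or> (coprime (CHAR('a)) n \<and> coprime (CHAR('a)) (n - 1))"
    and "compl_hyperplane n U1" and "compl_hyperplane n U2"
    and "Yv ^ (2*n+1) \<in> U1" and "Yv ^ (2*n+1) \<notin> U2"
  shows "\<not> (\<exists>f. induces_aut n f \<and> maps_onto n f U1 U2)"
proof
  assume "\<exists>f. induces_aut n f \<and> maps_onto n f U1 U2"
  then obtain f where f: "induces_aut n f" and onto: "maps_onto n f U1 U2" by blast
  obtain \<kappa> where "f Yv^(2*n+1) - cst \<kappa> * Yv^(2*n+1) \<in> In n"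
    using respects_relations_power_congr_Yv_power[OF assms(1,2)
        induces_aut_respects_relations[OF f]] .
  from In_add[OF induces_aut_power_congr[OF f, of Yv "2*n+1"] this]
  have "f (Yv^(2*n+1)) - cst \<kappa> * Yv^(2*n+1) \<in> In n" by simp
  moreover have "f (Yv^(2*n+1)) \<in> U2" using onto assms(5) by (simp add: maps_onto_def)
  moreover have "lin_subspace U2" "In n \<subseteq> U2" using assms(4)
    by (simp_all add: compl_hyperplane_def)
  ultimately have "Yv^(2*n+1) \<in> U2" using induces_aut_mem_subspace[OF f] by blast
  with assms(6) show False ..
qed

end
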